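(* Let $R$ be a commutative ring with identity and $a\in R$. Then $a\Gamma_a(R)[x]=a\Gamma_a(R[x])$, where $a\Gamma_a(R)[x]$ denotes the set of polynomials in $R[x]$ all of whose coefficients lie in $a\Gamma_a(R)$, and $a\Gamma_a(R[x])$ is computed with $R[x]$ viewed as a module over itself (equivalently, over $R$).
   Context: For a ring (or module) $S$ containing $a$ acting by multiplication: $\Gamma_{a}(S)=\{s\in S \mid a^{k}s=0 \text{ for some } k\in\mathbb{Z}^{+}\}$ and $a\Gamma_{a}(S)=\{as \mid s\in \Gamma_a(S)\}$. *)

theory Defs
  imports "HOL-Computational_Algebra.Polynomial"
begin

definition Gamma :: "'a::comm_ring_1 \<Rightarrow> 'a set" where
  "Gamma a = {s. \<exists>k::nat. k > 0 \<and> a ^ k * s = 0}"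

definition aGamma :: "'a::comm_ring_1 \<Rightarrow> 'a set" where
  "aGamma a = (\<lambda>s. a * s) ` Gamma a"

definition polys_over :: "'a::zero set \<Rightarrow> 'a poly set" where
  "polys_over A = {p. \<forall>i. coeff p i \<in> A}"

end

theory Submission
  imports Defs
begin

text \<open>
  Multiplication by the constant polynomial \<open>[:a:]\<close> acts coefficientwise, so a polynomial is
  killed by a power of \<open>[:a:]\<close> iff each coefficient is killed by a power of \<open>a\<close>; since only
  finitely many coefficients are nonzero, one common exponent then kills all of them.
  Hence \<open>\<Gamma>\<^sub>[:a:](R[x]) = \<Gamma>\<^sub>a(R)[x]\<close>, and multiplying by \<open>a\<close> commutes with taking
  coefficientwise polynomials because a coefficient \<open>0\<close> can always be written as \<open>a * 0\<close>.
\<close>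

lemma power_mult_eq_0_mono:
  fixes a s :: "'a::semiring_1"
  assumes "a ^ k * s = 0" and "k \<le> m"
  shows "a ^ m * s = 0"
proof -
  obtain d where "m = k + d" using \<open>k \<le> m\<close> le_Suc_ex by blast
  then have "a ^ m * s = a ^ d * (a ^ k * s)" by (simp add: power_add ac_simps)
  with assms(1) show ?thesis by simp
qed

lemma zero_in_Gamma: "0 \<in> Gamma a"
  unfolding Gamma_def by auto

lemma Gamma_const_poly: "Gamma [:a:] = polys_over (Gamma a)"
proof (intro equalityI subsetI)
  fix q assume "q \<in> Gamma [:a:]"
  then obtain k where "k > 0" "[:a:] ^ k * q = 0"
    unfolding Gamma_def by blast
  then have "a ^ k * coeff q i = 0" for i
    using coeff_smult[of "a ^ k" q i] by (simp add: poly_const_pow)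
  with \<open>k > 0\<close> show "q \<in> polys_over (Gamma a)"
    unfolding polys_over_def Gamma_def by blast
next
  fix q assume "q \<in> polys_over (Gamma a)"
  then have "\<forall>i. \<exists>k>0. a ^ k * coeff q i = 0"
    unfolding polys_over_def Gamma_def by blast
  then obtain k where k: "\<And>i. k i > 0" "\<And>i. a ^ k i * coeff q i = 0"
    by metis
  define K where "K = Max (k ` {..degree q})"
  have "0 < K"
    using k(1)[of 0] by (simp add: K_def less_le_trans)
  have "a ^ K * coeff q i = 0" for i
  proof (cases "i \<le> degree q")
    case True
    then have "k i \<le> K" by (simp add: K_def)
    with k(2) show ?thesis by (rule power_mult_eq_0_mono)
  qed (simp add: coeff_eq_0)
  then have "[:a:] ^ K * q = 0"
    by (intro poly_eqI) (simp add: poly_const_pow)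
  with \<open>0 < K\<close> show "q \<in> Gamma [:a:]"
    unfolding Gamma_def by auto
qed

lemma polys_over_image_mult:
  fixes c :: "'a::comm_semiring_0"
  assumes "0 \<in> A"
  shows "polys_over ((\<lambda>s. c * s) ` A) = smult c ` polys_over A"
proof (intro equalityI subsetI)
  fix p assume "p \<in> polys_over ((\<lambda>s. c * s) ` A)"
  then have "\<forall>i. \<exists>s\<in>A. coeff p i = c * s"
    unfolding polys_over_def by blast
  then obtain s where s: "\<And>i. s i \<in> A" "\<And>i. coeff p i = c * s i"
    by metis
  define t where "t i = (if coeff p i = 0 then 0 else s i)" for i
  have coeff_t: "coeff (Abs_poly t) = t"
    by (rule coeff_Abs_poly[of "degree p"]) (simp add: t_def coeff_eq_0)
  have "p = smult c (Abs_poly t)"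
    by (intro poly_eqI) (simp add: coeff_t t_def s(2))
  moreover have "Abs_poly t \<in> polys_over A"
    using assms s(1) by (simp add: polys_over_def coeff_t t_def)
  ultimately show "p \<in> smult c ` polys_over A" by blast
qed (auto simp: polys_over_def)

theorem mainTheorem8:
  fixes a :: "'a::comm_ring_1"
  shows "polys_over (aGamma a) = aGamma [:a:]"
proof -
  have "polys_over (aGamma a) = smult a ` polys_over (Gamma a)"
    unfolding aGamma_def by (rule polys_over_image_mult[OF zero_in_Gamma])
  also have "\<dots> = (\<lambda>q. [:a:] * q) ` Gamma [:a:]"
    by (simp add: Gamma_const_poly)
  finally show ?thesis
    unfolding aGamma_def .
qed

end
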